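(* Let $m,n$ be positive integers. If $BS(m+1,m)\neq\emptyset$ and $BS(n+1,n)\neq\emptyset$, then $BS(m',m')\neq\emptyset$, where $m'=(2m+1)(2n+1)$.
   Context: For a sequence $\mathbf{s}=(s_0,\dots,s_{l-1})\in\{\pm1\}^l$ and an integer $j\ge 0$, its non-periodic autocorrelation is $N_{\mathbf{s}}(j)=\sum_{i=0}^{l-j-1}s_is_{i+j}$ if $0\le j<l$ and $N_{\mathbf{s}}(j)=0$ otherwise. For positive integers $p,q$, $BS(p,q)$ denotes the set of quadruples $(\mathbf{a},\mathbf{b},\mathbf{c},\mathbf{d})$ of $(\pm1)$-sequences of lengths $p,p,q,q$ respectively (base sequences) such that $N_{\mathbf{a}}(j)+N_{\mathbf{b}}(j)+N_{\mathbf{c}}(j)+N_{\mathbf{d}}(j)=0$ for every integer $j\ge 1$. *)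

theory Defs
  imports Main
begin

definition pm1_seq :: "int list \<Rightarrow> bool" where
  "pm1_seq s \<longleftrightarrow> (\<forall>x \<in> set s. x = 1 \<or> x = -1)"

definition npaf :: "int list \<Rightarrow> nat \<Rightarrow> int" where
  "npaf s j = (if j < length s then (\<Sum>i<length s - j. s ! i * s ! (i + j)) else 0)"

definition BS :: "nat \<Rightarrow> nat \<Rightarrow> (int list \<times> int list \<times> int list \<times> int list) set" where
  "BS p q = {(a, b, c, d). pm1_seq a \<and> pm1_seq b \<and> pm1_seq c \<and> pm1_seq d \<and>
      length a = p \<and> length b = p \<and> length c = q \<and> length d = q \<and>
      (\<forall>j::nat. j \<ge> 1 \<longrightarrow> npaf a j + npaf b j + npaf c j + npaf d j = 0)}"

end

theory Submission
  imports Defs "HOL-Computational_Algebra.Polynomial"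
begin

text \<open>
  Writing \<open>S\<^sup>*\<close> for the polynomial of the reversed sequence, a quadruple of lengths
  \<open>p, p, q, q\<close> lies in \<open>BS(p, q)\<close> iff
  \<open>A A\<^sup>* + B B\<^sup>* + x\<^bsup>p-q\<^esup> (C C\<^sup>* + D D\<^sup>*) = 2(p + q) x\<^bsup>p-1\<^esup>\<close>,
  since the coefficients of \<open>S S\<^sup>*\<close> are the aperiodic autocorrelations of \<open>S\<close>.
  From \<open>(a,b,c,d) \<in> BS(m+1, m)\<close> and \<open>(e,f,g,h) \<in> BS(n+1, n)\<close> one builds four sequences
  of length \<open>(2m+1)(2n+1)\<close> out of blocks of length \<open>N = 2n+1\<close>: each has a polynomial of the
  shape \<open>A(W\<^sup>2) E(x\<^sup>2) + B(W\<^sup>2) x F(x\<^sup>2) + W (C(W\<^sup>2) G(x\<^sup>2) + D(W\<^sup>2) x H(x\<^sup>2))\<close> with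
  \<open>W = x\<^sup>N\<close>, where the inputs are suitably reversed and negated. A polynomial identity in
  the style of Euler's four-square identity then factors their autocorrelation sum as the
  product of the two input sums evaluated at \<open>W\<^sup>2\<close> and \<open>x\<^sup>2\<close>, which is
  \<open>(4m+2)(4n+2) x\<^bsup>(2m+1)(2n+1)-1\<^esup>\<close>.
\<close>

section \<open>Autocorrelations as polynomial coefficients\<close>

lemma Poly_eq_sum_monom: "Poly s = (\<Sum>i<length s. monom (s ! i) i)"
  by (rule poly_eqI) (simp add: coeff_sum coeff_monom nth_default_def)

lemma Poly_rev_eq_sum_monom: "Poly (rev s) = (\<Sum>i<length s. monom (s ! i) (length s - 1 - i))"
proof (rule poly_eqI)
  fix t
  have "coeff (\<Sum>i<length s. monom (s ! i) (length s - 1 - i)) t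
      = (\<Sum>i<length s. if i = length s - 1 - t \<and> t < length s then s ! i else 0)"
    by (auto simp: coeff_sum coeff_monom intro!: sum.cong)
  then show "coeff (Poly (rev s)) t = coeff (\<Sum>i<length s. monom (s ! i) (length s - 1 - i)) t"
    by (cases "t < length s") (auto simp: nth_default_def rev_nth sum.delta')
qed

lemma coeff_Poly_mult_Poly_rev:
  "coeff (Poly s * Poly (rev s)) t =
     (\<Sum>i<length s. \<Sum>k<length s. if i + (length s - 1 - k) = t then s ! i * s ! k else 0)"
  unfolding Poly_eq_sum_monom[of s] Poly_rev_eq_sum_monom[of s] sum_product
  by (simp add: coeff_sum mult_monom coeff_monom)

lemma coeff_Poly_mult_Poly_rev_above:
  "coeff (Poly s * Poly (rev s)) (length s - 1 + j) = npaf s j"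
proof -
  let ?l = "length s"
  have "coeff (Poly s * Poly (rev s)) (?l - 1 + j) =
      (\<Sum>k<?l. \<Sum>i<?l. if i = k + j then s ! i * s ! k else 0)"
    unfolding coeff_Poly_mult_Poly_rev by (subst sum.swap) (auto intro!: sum.cong)
  also have "\<dots> = (\<Sum>k<?l. if k + j < ?l then s ! k * s ! (k + j) else 0)"
    by (intro sum.cong refl) (simp add: sum.delta' mult.commute)
  also have "\<dots> = (\<Sum>k\<in>{k\<in>{..<?l}. k + j < ?l}. s ! k * s ! (k + j))"
    by (rule sum.inter_filter[symmetric]) simp
  also have "{k\<in>{..<?l}. k + j < ?l} = {..<?l - j}" by auto
  finally show ?thesis by (simp add: npaf_def)
qed

lemma coeff_Poly_mult_Poly_rev_below:
  assumes "j < length s"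
  shows "coeff (Poly s * Poly (rev s)) (length s - 1 - j) = npaf s j"
proof -
  let ?l = "length s"
  have "coeff (Poly s * Poly (rev s)) (?l - 1 - j) =
      (\<Sum>i<?l. \<Sum>k<?l. if k = i + j then s ! i * s ! k else 0)"
    unfolding coeff_Poly_mult_Poly_rev
    by (intro sum.cong refl) (use assms in auto)
  also have "\<dots> = (\<Sum>i<?l. if i + j < ?l then s ! i * s ! (i + j) else 0)"
    by (intro sum.cong refl) (simp add: sum.delta')
  also have "\<dots> = (\<Sum>i\<in>{i\<in>{..<?l}. i + j < ?l}. s ! i * s ! (i + j))"
    by (rule sum.inter_filter[symmetric]) simp
  also have "{i\<in>{..<?l}. i + j < ?l} = {..<?l - j}" by auto
  finally show ?thesis using assms by (simp add: npaf_def)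
qed

lemma npaf_0_pm1_seq:
  assumes "pm1_seq s"
  shows "npaf s 0 = int (length s)"
proof -
  have "s ! i * s ! i = 1" if "i < length s" for i
    using assms nth_mem[OF that] by (auto simp: pm1_seq_def)
  then show ?thesis by (simp add: npaf_def)
qed

definition autocorr_poly_sum ::
    "nat \<Rightarrow> int list \<Rightarrow> int list \<Rightarrow> int list \<Rightarrow> int list \<Rightarrow> int poly" where
  "autocorr_poly_sum k a b c d = Poly a * Poly (rev a) + Poly b * Poly (rev b)
     + monom 1 k * (Poly c * Poly (rev c) + Poly d * Poly (rev d))"

lemma coeff_autocorr_poly_sum:
  assumes "length a = p" "length b = p" "length c = q" "length d = q" "0 < q" "q \<le> p"
  shows coeff_autocorr_poly_sum_above: "coeff (autocorr_poly_sum (p - q) a b c d) (p - 1 + j) =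
      npaf a j + npaf b j + npaf c j + npaf d j"
    and coeff_autocorr_poly_sum_below: "j < p \<Longrightarrow>
      coeff (autocorr_poly_sum (p - q) a b c d) (p - 1 - j) = npaf a j + npaf b j + npaf c j + npaf d j"
proof -
  have shift_above: "coeff (monom 1 (p - q) * P) (p - 1 + j) = coeff P (q - 1 + j)" for P :: "int poly"
    using assms by (auto simp: coeff_monom_mult add.commute)
  show "coeff (autocorr_poly_sum (p - q) a b c d) (p - 1 + j) = npaf a j + npaf b j + npaf c j + npaf d j"
    using coeff_Poly_mult_Poly_rev_above[of a j] coeff_Poly_mult_Poly_rev_above[of b j]
      coeff_Poly_mult_Poly_rev_above[of c j] coeff_Poly_mult_Poly_rev_above[of d j] assms
    unfolding autocorr_poly_sum_def coeff_add shift_above by simp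
  assume "j < p"
  show "coeff (autocorr_poly_sum (p - q) a b c d) (p - 1 - j) = npaf a j + npaf b j + npaf c j + npaf d j"
  proof (cases "j < q")
    case True
    then show ?thesis
      using coeff_Poly_mult_Poly_rev_below[of j a] coeff_Poly_mult_Poly_rev_below[of j b]
        coeff_Poly_mult_Poly_rev_below[of j c] coeff_Poly_mult_Poly_rev_below[of j d] assms \<open>j < p\<close>
      by (simp add: autocorr_poly_sum_def coeff_monom_mult)
  next
    case False
    then show ?thesis
      using coeff_Poly_mult_Poly_rev_below[of j a] coeff_Poly_mult_Poly_rev_below[of j b] assms \<open>j < p\<close>
      by (simp add: autocorr_poly_sum_def coeff_monom_mult npaf_def)
  qed
qed

lemma BS_iff_autocorr_poly_sum:
  assumes "0 < q" "q \<le> p"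
  shows "(a, b, c, d) \<in> BS p q \<longleftrightarrow>
    pm1_seq a \<and> pm1_seq b \<and> pm1_seq c \<and> pm1_seq d \<and>
    length a = p \<and> length b = p \<and> length c = q \<and> length d = q \<and>
    autocorr_poly_sum (p - q) a b c d = monom (int (2 * p + 2 * q)) (p - 1)"
  (is "_ \<longleftrightarrow> ?pa \<and> ?pb \<and> ?pc \<and> ?pd \<and> ?la \<and> ?lb \<and> ?lc \<and> ?ld \<and> ?S = ?rhs")
proof (cases "?pa \<and> ?pb \<and> ?pc \<and> ?pd \<and> ?la \<and> ?lb \<and> ?lc \<and> ?ld")
  case True
  then have pm1: "?pa" "?pb" "?pc" "?pd" and len: "?la" "?lb" "?lc" "?ld" by auto
  have npaf_0: "npaf a 0 + npaf b 0 + npaf c 0 + npaf d 0 = int (2 * p + 2 * q)"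
    using pm1 len by (simp add: npaf_0_pm1_seq)
  have "(\<forall>j::nat. j \<ge> 1 \<longrightarrow> npaf a j + npaf b j + npaf c j + npaf d j = 0) \<longleftrightarrow> ?S = ?rhs"
  proof
    assume zero: "\<forall>j::nat. j \<ge> 1 \<longrightarrow> npaf a j + npaf b j + npaf c j + npaf d j = 0"
    show "?S = ?rhs"
    proof (rule poly_eqI)
      fix t
      show "coeff ?S t = coeff ?rhs t"
      proof (cases "t < p - 1")
        case True
        then show ?thesis
          using coeff_autocorr_poly_sum_below[OF len assms, of "p - 1 - t"]
            len zero by (simp add: coeff_monom)
      next
        case False
        then show ?thesis
          using coeff_autocorr_poly_sum_above[OF len assms, of "t - (p - 1)"]
            len zero[rule_format, of "t - (p - 1)"] npaf_0 by (auto simp: coeff_monom)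
      qed
    qed
  next
    assume "?S = ?rhs"
    show "\<forall>j::nat. j \<ge> 1 \<longrightarrow> npaf a j + npaf b j + npaf c j + npaf d j = 0"
    proof (intro allI impI)
      fix j :: nat
      assume "j \<ge> 1"
      then have "coeff ?rhs (p - 1 + j) = 0"
        using assms by (simp add: coeff_monom)
      then show "npaf a j + npaf b j + npaf c j + npaf d j = 0"
        using coeff_autocorr_poly_sum_above[OF len assms, of j] \<open>?S = ?rhs\<close> by simp
    qed
  qed
  then show ?thesis using True by (auto simp: BS_def)
qed (auto simp: BS_def)

section \<open>Interleaving and concatenation of blocks\<close>

fun interleave :: "'a list \<Rightarrow> 'a list \<Rightarrow> 'a list" where
  "interleave (x # xs) (y # ys) = x # y # interleave xs ys"
| "interleave xs [] = xs"
| "interleave [] ys = ys"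

lemma length_interleave [simp]: "length (interleave xs ys) = length xs + length ys"
  by (induction xs ys rule: interleave.induct) auto

lemma set_interleave [simp]: "set (interleave xs ys) = set xs \<union> set ys"
  by (induction xs ys rule: interleave.induct) auto

lemma map_interleave: "map f (interleave xs ys) = interleave (map f xs) (map f ys)"
  by (induction xs ys rule: interleave.induct) auto

lemma interleave_snoc:
  "length xs = Suc (length ys) \<Longrightarrow> interleave (xs @ [x]) (ys @ [y]) = interleave xs ys @ [y, x]"
  by (induction xs ys rule: interleave.induct) (auto simp: length_Suc_conv)

lemma rev_interleave:
  "length xs = Suc (length ys) \<Longrightarrow> rev (interleave xs ys) = interleave (rev xs) (rev ys)"
  by (induction xs ys rule: interleave.induct) (auto simp: interleave_snoc length_Suc_conv)

lemma Poly_interleave: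
  fixes xs ys :: "'a::comm_semiring_1 list"
  assumes "length xs = Suc (length ys)"
  shows "Poly (interleave xs ys) = pcompose (Poly xs) ([:0, 1:] ^ 2) + [:0, 1:] * pcompose (Poly ys) ([:0, 1:] ^ 2)"
  using assms
proof (induction xs ys rule: interleave.induct)
  case (1 x xs y ys)
  then show ?case
    by (simp add: pcompose_pCons power2_eq_square algebra_simps)
qed (auto simp: length_Suc_conv pcompose_pCons)

lemma poly_Poly_interleave:
  fixes ps qs :: "'a::comm_semiring_1 list"
  assumes "length ps = Suc (length qs)"
  shows "poly (Poly (interleave ps qs)) x = poly (Poly ps) (x ^ 2) + x * poly (Poly qs) (x ^ 2)"
  using assms by (simp add: Poly_interleave poly_pcompose)

text \<open>Horner's scheme with polynomial coefficients: block \<open>i\<close> contributes \<open>x\<^bsup>r i\<^esup>\<close> times its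
  own polynomial.\<close>

lemma Poly_concat:
  fixes xss :: "'a::comm_semiring_1 list list"
  shows "(\<forall>xs \<in> set xss. length xs = r) \<Longrightarrow> Poly (concat xss) = poly (Poly (map Poly xss)) ([:0, 1:] ^ r)"
  by (induction xss) (simp_all add: Poly_append monom_altdef)

lemma poly_Poly_zip_smult:
  assumes "length U = length V"
  shows "poly (Poly (map (\<lambda>(u, v). smult u P + smult v Q) (zip U V))) x =
    pcompose (Poly U) x * P + pcompose (Poly V) x * Q"
  using assms
proof (induction U arbitrary: V)
  case (Cons u U)
  then obtain v V' where "V = v # V'" by (cases V) auto
  with Cons show ?case
    by (simp add: pcompose_pCons algebra_simps)
qed simp

section \<open>Block products of sequences\<close>

definition block :: "int list \<Rightarrow> int list \<Rightarrow> int \<times> int \<Rightarrow> int list" where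
  "block E F = (\<lambda>(u, v). interleave (map ((*) u) E) (map ((*) v) F))"

definition block_product :: "int list \<Rightarrow> int list \<Rightarrow> int list \<Rightarrow> int list \<Rightarrow>
    int list \<Rightarrow> int list \<Rightarrow> int list \<Rightarrow> int list \<Rightarrow> int list" where
  "block_product U0 U1 U2 U3 V0 V1 V2 V3 =
     concat (interleave (map (block V0 V1) (zip U0 U1)) (map (block V2 V3) (zip U2 U3)))"

lemma length_block:
  "length V0 = Suc l \<Longrightarrow> length V1 = l \<Longrightarrow> length (block V0 V1 uv) = 2 * l + 1"
  by (simp add: block_def split_def)

lemma set_block: "set (block V0 V1 (u, v)) = (*) u ` set V0 \<union> (*) v ` set V1"
  by (simp add: block_def)

lemma length_block_product:
  assumes "length U0 = Suc k" "length U1 = Suc k" "length U2 = k" "length U3 = k"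
    "length V0 = Suc l" "length V1 = l" "length V2 = Suc l" "length V3 = l"
  shows "length (block_product U0 U1 U2 U3 V0 V1 V2 V3) = (2 * k + 1) * (2 * l + 1)"
proof -
  have "length (concat xss) = length xss * (2 * l + 1)" if "\<forall>xs \<in> set xss. length xs = 2 * l + 1"
    for xss :: "int list list"
    using that by (induction xss) auto
  moreover have "\<forall>xs \<in> set (interleave (map (block V0 V1) (zip U0 U1)) (map (block V2 V3) (zip U2 U3))).
      length xs = 2 * l + 1"
    using assms by (auto simp: length_block)
  ultimately show ?thesis
    using assms by (simp add: block_product_def algebra_simps)
qed

lemma set_block_product:
  "set (block_product U0 U1 U2 U3 V0 V1 V2 V3) \<subseteq>
     {u * v | u v. u \<in> set U0 \<union> set U1 \<union> set U2 \<union> set U3 \<and> v \<in> set V0 \<union> set V1 \<union> set V2 \<union> set V3}"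
  by (fastforce simp: block_product_def set_block dest: set_zip_leftD set_zip_rightD)

lemma map_Poly_block:
  assumes "length V0 = Suc (length V1)"
  shows "map Poly (map (block V0 V1) uvs) = map (\<lambda>(u, v).
    smult u (pcompose (Poly V0) ([:0, 1:]\<^sup>2)) + smult v ([:0, 1:] * pcompose (Poly V1) ([:0, 1:]\<^sup>2))) uvs"
  using assms by (auto simp: block_def Poly_interleave Poly_map pcompose_smult)

lemma rev_block:
  "length V0 = Suc (length V1) \<Longrightarrow> rev (block V0 V1 uv) = block (rev V0) (rev V1) uv"
  by (simp add: block_def split_def rev_interleave rev_map)

lemma rev_block_product:
  assumes "length U0 = Suc k" "length U1 = Suc k" "length U2 = k" "length U3 = k"
    "length V0 = Suc l" "length V1 = l" "length V2 = Suc l" "length V3 = l"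
  shows "rev (block_product U0 U1 U2 U3 V0 V1 V2 V3) =
    block_product (rev U0) (rev U1) (rev U2) (rev U3) (rev V0) (rev V1) (rev V2) (rev V3)"
proof -
  have "rev (block_product U0 U1 U2 U3 V0 V1 V2 V3) =
      concat (map rev (interleave (rev (map (block V0 V1) (zip U0 U1))) (rev (map (block V2 V3) (zip U2 U3)))))"
    using assms by (simp add: block_product_def rev_concat rev_interleave)
  also have "\<dots> = block_product (rev U0) (rev U1) (rev U2) (rev U3) (rev V0) (rev V1) (rev V2) (rev V3)"
    using assms by (simp add: block_product_def map_interleave rev_map zip_rev comp_def rev_block)
  finally show ?thesis .
qed

lemma Poly_block_product:
  assumes "length U0 = Suc k" "length U1 = Suc k" "length U2 = k" "length U3 = k"
    "length V0 = Suc l" "length V1 = l" "length V2 = Suc l" "length V3 = l"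
  shows "Poly (block_product U0 U1 U2 U3 V0 V1 V2 V3) =
    pcompose (Poly U0) (([:0, 1:] ^ (2 * l + 1))\<^sup>2) * pcompose (Poly V0) ([:0, 1:]\<^sup>2)
    + pcompose (Poly U1) (([:0, 1:] ^ (2 * l + 1))\<^sup>2) * ([:0, 1:] * pcompose (Poly V1) ([:0, 1:]\<^sup>2))
    + [:0, 1:] ^ (2 * l + 1) *
      (pcompose (Poly U2) (([:0, 1:] ^ (2 * l + 1))\<^sup>2) * pcompose (Poly V2) ([:0, 1:]\<^sup>2)
       + pcompose (Poly U3) (([:0, 1:] ^ (2 * l + 1))\<^sup>2) * ([:0, 1:] * pcompose (Poly V3) ([:0, 1:]\<^sup>2)))"
  (is "_ = ?rhs")
proof -
  let ?W = "[:0, 1:] ^ (2 * l + 1) :: int poly"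
  let ?E = "map (block V0 V1) (zip U0 U1)" and ?O = "map (block V2 V3) (zip U2 U3)"
  have V01: "length V0 = Suc (length V1)" and V23: "length V2 = Suc (length V3)"
    and U01: "length U0 = length U1" and U23: "length U2 = length U3"
    using assms by simp_all
  have "\<forall>xs \<in> set (interleave ?E ?O). length xs = 2 * l + 1"
    using assms by (auto simp: length_block)
  then have "Poly (block_product U0 U1 U2 U3 V0 V1 V2 V3) = poly (Poly (map Poly (interleave ?E ?O))) ?W"
    unfolding block_product_def by (rule Poly_concat)
  also have "\<dots> = poly (Poly (interleave (map Poly ?E) (map Poly ?O))) ?W"
    by (simp only: map_interleave)
  also have "\<dots> = poly (Poly (map Poly ?E)) (?W\<^sup>2) + ?W * poly (Poly (map Poly ?O)) (?W\<^sup>2)"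
    using assms by (simp add: poly_Poly_interleave)
  also have "\<dots> = ?rhs"
    unfolding map_Poly_block[OF V01] map_Poly_block[OF V23]
      poly_Poly_zip_smult[OF U01] poly_Poly_zip_smult[OF U23] ..
  finally show ?thesis .
qed

section \<open>Products of base sequences\<close>

lemma pm1_seq_rev [simp]: "pm1_seq (rev s) \<longleftrightarrow> pm1_seq s"
  by (simp add: pm1_seq_def)

lemma pm1_seq_map_uminus [simp]: "pm1_seq (map uminus s) \<longleftrightarrow> pm1_seq s"
  by (auto simp: pm1_seq_def)

lemma pm1_seq_block_product:
  assumes "pm1_seq U0" "pm1_seq U1" "pm1_seq U2" "pm1_seq U3"
    "pm1_seq V0" "pm1_seq V1" "pm1_seq V2" "pm1_seq V3"
  shows "pm1_seq (block_product U0 U1 U2 U3 V0 V1 V2 V3)"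
  using set_block_product[of U0 U1 U2 U3 V0 V1 V2 V3] assms
  unfolding pm1_seq_def by fastforce

lemma Poly_map_uminus: "Poly (map uminus xs) = - Poly xs"
  by (induction xs) simp_all

lemma pcompose_monom: "pcompose (monom c n) q = smult c (q ^ n)"
  by (induction n) (simp_all add: monom_0 monom_Suc pcompose_pCons)

lemma base_seq_product_identity:
  fixes A A' B B' C C' D D' E E' F F' G G' H H' W Z :: "'a::comm_ring_1"
  shows
 "(A * E' + B * (Z * - H) + W * (C * F' + D' * (Z * - G))) *
  (A' * E + B' * (Z * - H') + W * (C' * F + D * (Z * - G')))
+ (B * - E + A * (Z * - H') + W * (D * F' + C' * (Z * G))) *
  (B' * - E' + A' * (Z * - H) + W * (D' * F + C * (Z * G')))
+ (B' * F' + A * (Z * G') + W * (D' * E + C' * (Z * H))) *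
  (B * F + A' * (Z * G) + W * (D * E' + C * (Z * H')))
+ (A * F + B' * (Z * - G) + W * (C * - E + D * (Z * H))) *
  (A' * F' + B * (Z * - G') + W * (C' * - E' + D' * (Z * H')))
= (A * A' + B * B' + W\<^sup>2 * (C * C' + D * D')) * (E * E' + F * F' + Z\<^sup>2 * (G * G' + H * H'))"
  by (simp add: algebra_simps power2_eq_square)

fun base_seq_product :: "int list \<times> int list \<times> int list \<times> int list \<Rightarrow>
    int list \<times> int list \<times> int list \<times> int list \<Rightarrow> int list \<times> int list \<times> int list \<times> int list" where
  "base_seq_product (a, b, c, d) (e, f, g, h) =
    (block_product a b c (rev d) (rev e) (map uminus h) (rev f) (map uminus g),
     block_product b a d (rev c) (map uminus e) (map uminus (rev h)) (rev f) g,
     block_product (rev b) a (rev d) (rev c) (rev f) (rev g) e h,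
     block_product a (rev b) c d f (map uminus g) (map uminus e) h)"

lemma autocorr_poly_sum_base_seq_product:
  assumes "length a = Suc m" "length b = Suc m" "length c = m" "length d = m"
    "length e = Suc n" "length f = Suc n" "length g = n" "length h = n"
    and "base_seq_product (a, b, c, d) (e, f, g, h) = (y0, y1, y2, y3)"
  shows "autocorr_poly_sum 0 y0 y1 y2 y3 =
    pcompose (autocorr_poly_sum 1 a b c d) (([:0, 1:] ^ (2 * n + 1))\<^sup>2) *
    pcompose (autocorr_poly_sum 1 e f g h) ([:0, 1:]\<^sup>2)"
proof -
  have y: "y0 = block_product a b c (rev d) (rev e) (map uminus h) (rev f) (map uminus g)"
    "y1 = block_product b a d (rev c) (map uminus e) (map uminus (rev h)) (rev f) g"
    "y2 = block_product (rev b) a (rev d) (rev c) (rev f) (rev g) e h"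
    "y3 = block_product a (rev b) c d f (map uminus g) (map uminus e) h"
    using assms(9) by simp_all
  show ?thesis
    unfolding autocorr_poly_sum_def y
    by (simp only: rev_block_product Poly_block_product length_rev length_map assms(1-8)
        rev_map rev_rev_ident Poly_map_uminus pcompose_uminus pcompose_add pcompose_mult
        pcompose_monom smult_1_left power_one_right monom_eq_1 mult_1)
      (rule trans[OF _ base_seq_product_identity], simp only: add.assoc)
qed

lemma base_seq_product_in_BS:
  assumes "(a, b, c, d) \<in> BS (Suc m) m" "(e, f, g, h) \<in> BS (Suc n) n" "0 < m" "0 < n"
  shows "base_seq_product (a, b, c, d) (e, f, g, h)
    \<in> BS ((2 * m + 1) * (2 * n + 1)) ((2 * m + 1) * (2 * n + 1))"
proof -
  let ?L = "(2 * m + 1) * (2 * n + 1)"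
  obtain y0 y1 y2 y3 where y: "base_seq_product (a, b, c, d) (e, f, g, h) = (y0, y1, y2, y3)"
    by (metis prod_cases4)
  have abcd: "pm1_seq a" "pm1_seq b" "pm1_seq c" "pm1_seq d"
    "length a = Suc m" "length b = Suc m" "length c = m" "length d = m"
    and S1: "autocorr_poly_sum 1 a b c d = monom (int (4 * m + 2)) m"
    using assms(1) BS_iff_autocorr_poly_sum[of m "Suc m"] assms(3) by simp_all
  have efgh: "pm1_seq e" "pm1_seq f" "pm1_seq g" "pm1_seq h"
    "length e = Suc n" "length f = Suc n" "length g = n" "length h = n"
    and S2: "autocorr_poly_sum 1 e f g h = monom (int (4 * n + 2)) n"
    using assms(2) BS_iff_autocorr_poly_sum[of n "Suc n"] assms(4) by simp_all
  have "length y0 = ?L" "length y1 = ?L" "length y2 = ?L" "length y3 = ?L"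
    using y abcd efgh by (auto simp: length_block_product)
  moreover have "pm1_seq y0" "pm1_seq y1" "pm1_seq y2" "pm1_seq y3"
    using y abcd efgh by (auto intro!: pm1_seq_block_product)
  moreover have "autocorr_poly_sum 0 y0 y1 y2 y3 = monom (int (2 * ?L + 2 * ?L)) (?L - 1)"
  proof -
    have exponent: "?L - 1 = (2 * n + 1) * 2 * m + 2 * n" by (simp add: algebra_simps)
    have coefficient: "int (2 * ?L + 2 * ?L) = int (4 * n + 2) * int (4 * m + 2)"
      by (simp add: algebra_simps)
    have "autocorr_poly_sum 0 y0 y1 y2 y3 =
        smult (int (4 * m + 2)) ((([:0, 1:] ^ (2 * n + 1))\<^sup>2) ^ m) * smult (int (4 * n + 2)) (([:0, 1:]\<^sup>2) ^ n)"
      unfolding autocorr_poly_sum_base_seq_product[OF abcd(5-8) efgh(5-8) y] S1 S2 pcompose_monom ..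
    also have "\<dots> = monom (int (2 * ?L + 2 * ?L)) (?L - 1)"
      unfolding exponent coefficient monom_altdef power_add power_mult
      by (simp only: mult_smult_left mult_smult_right smult_smult)
    finally show ?thesis .
  qed
  ultimately show ?thesis
    unfolding y using BS_iff_autocorr_poly_sum[of ?L ?L] by simp
qed

theorem theorem1p1:
  fixes m n :: nat
  assumes "m > 0" and "n > 0"
    and "BS (m + 1) m \<noteq> {}" and "BS (n + 1) n \<noteq> {}"
  shows "BS ((2 * m + 1) * (2 * n + 1)) ((2 * m + 1) * (2 * n + 1)) \<noteq> {}"
proof -
  from assms(3) obtain a b c d where "(a, b, c, d) \<in> BS (Suc m) m" by auto
  moreover from assms(4) obtain e f g h where "(e, f, g, h) \<in> BS (Suc n) n" by auto
  ultimately show ?thesis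
    using base_seq_product_in_BS assms(1,2) by blast
qed

end
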